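(* Assume $\omega_\ell>0$, $\sum_\ell\omega_\ell=1$, $\sum_\ell\omega_\ell d_\ell>0$, and that for a constant $c_1\ge1$, $\|\omega\|_\infty\sum_\ell\sum_{j\in J}p^{(\ell)}_{ij}\le c_1\sum_\ell\sum_{j\in J}\omega_\ell p^{(\ell)}_{ij}$ for all $i\in[n]$, $J\subseteq[n]$. Fix $\alpha>0$ and $r\ge1$. Then there is a constant $C=C(c_1)$ such that with probability at least $1-n^{-r}$: for every $m\in[n]$ with $\sqrt{m/n}\le\alpha$ and every $I,J\subseteq[n]$ with $|I|=|J|=m$, all but at most $m\|\omega\|_\infty/(\alpha\sum_\ell\omega_\ell d_\ell)$ indices $i\in I$ satisfy $\sum_{j\in J}\bar A_{ij}\le Cr\alpha\sum_\ell\omega_\ell d_\ell$.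
   Context: Here $A^{(1)},\dots,A^{(L)}$ are random $n\times n$ matrices whose entries $A^{(\ell)}_{ij}\sim\mathrm{Bern}(p^{(\ell)}_{ij})$, $i,j\in[n]$, $\ell\in[L]$, are all mutually independent (no symmetry imposed). $\bar A=\sum_\ell\omega_\ell A^{(\ell)}$, $d_\ell=\max_{i,j}np^{(\ell)}_{ij}$, $\|\omega\|_\infty=\max_\ell\omega_\ell$. *)

theory Defs
  imports "HOL-Probability.Probability"
begin

text \<open>Layers are indexed by l < L, vertices by i, j < n.
  p l i j is the Bernoulli parameter of entry (i,j) of the l-th matrix.
  A sample is a function A :: nat \<times> nat \<times> nat \<Rightarrow> bool, with A (l,i,j) = A^(l)_ij.\<close>

definition dmax :: "nat \<Rightarrow> (nat \<Rightarrow> nat \<Rightarrow> nat \<Rightarrow> real) \<Rightarrow> nat \<Rightarrow> real" where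
  "dmax n p l = Max {real n * p l i j | i j. i < n \<and> j < n}"

definition winf :: "nat \<Rightarrow> (nat \<Rightarrow> real) \<Rightarrow> real" where
  "winf L \<omega> = Max (\<omega> ` {..<L})"

definition Abar :: "nat \<Rightarrow> (nat \<Rightarrow> real) \<Rightarrow> (nat \<times> nat \<times> nat \<Rightarrow> bool) \<Rightarrow> nat \<Rightarrow> nat \<Rightarrow> real" where
  "Abar L \<omega> A i j = (\<Sum>l<L. \<omega> l * (if A (l, i, j) then 1 else 0))"

definition multilayer_pmf :: "nat \<Rightarrow> nat \<Rightarrow> (nat \<Rightarrow> nat \<Rightarrow> nat \<Rightarrow> real) \<Rightarrow> (nat \<times> nat \<times> nat \<Rightarrow> bool) pmf" where
  "multilayer_pmf L n p =
     Pi_pmf ({..<L} \<times> {..<n} \<times> {..<n}) False (\<lambda>(l, i, j). bernoulli_pmf (p l i j))"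

end

theory Submission
  imports Defs
begin

text \<open>Write W = max \<omega> and D = \<Sum>\<omega>(l) d(l). Suppose that for some m and sets I, J of
  size m, a set B of more than m W / (\<alpha> D) rows of I has J-row sums of Abar above 8 r \<alpha> D.
  Then the block sum of Abar over B \<times> J is at least |B| 8 r \<alpha> D. After division by W this
  block sum is a weighted sum of independent Bernoulli variables with weights in [0, 1] and
  mean at most |B| m D / (n W), so a Chernoff bound gives the event probability at most
  exp (-8 r m (1 + ln (n/m) / 2)). This beats the (n choose m)^2 2^m choices of (I, J, B)
  and the n choices of m, so the theorem holds with C = 8.\<close>

lemma exp_mult_le_chord:
  fixes s c :: real
  assumes "0 \<le> c" "c \<le> 1"
  shows "exp (s * c) \<le> 1 + c * (exp s - 1)"
proof -
  have "exp ((1 - c) *\<^sub>R 0 + c *\<^sub>R s) \<le> (1 - c) * exp 0 + c * exp s"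
    using convex_onD[OF exp_convex, of c 0 s] assms by auto
  thus ?thesis by (simp add: algebra_simps)
qed

lemma bernoulli_mgf_le:
  fixes c q s :: real
  assumes c: "0 \<le> c" "c \<le> 1" and q: "0 \<le> q" "q \<le> 1"
  shows "measure_pmf.expectation (bernoulli_pmf q) (\<lambda>v. exp (s * c * (if v then 1 else 0)))
           \<le> exp (q * c * (exp s - 1))"
proof -
  have "measure_pmf.expectation (bernoulli_pmf q) (\<lambda>v. exp (s * c * (if v then 1 else 0)))
      = q * exp (s * c) + (1 - q)"
    using q by simp
  also have "\<dots> \<le> q * (1 + c * (exp s - 1)) + (1 - q)"
    using exp_mult_le_chord[OF c] q by (intro add_right_mono mult_left_mono) auto
  also have "\<dots> = 1 + q * c * (exp s - 1)" by (simp add: algebra_simps)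
  also have "\<dots> \<le> exp (q * c * (exp s - 1))" by (rule exp_ge_add_one_self)
  finally show ?thesis .
qed

lemma prob_weighted_bernoulli_sum_ge:
  fixes X :: "'a set" and c q :: "'a \<Rightarrow> real" and s \<tau> :: real
  assumes fin: "finite X" and c: "\<And>x. x \<in> X \<Longrightarrow> 0 \<le> c x \<and> c x \<le> 1"
    and q: "\<And>x. x \<in> X \<Longrightarrow> 0 \<le> q x \<and> q x \<le> 1" and s: "s \<ge> 0"
  shows "measure_pmf.prob (Pi_pmf X False (\<lambda>x. bernoulli_pmf (q x)))
           {A. \<tau> \<le> (\<Sum>x\<in>X. c x * (if A x then 1 else 0))}
         \<le> exp (- s * \<tau> + (exp s - 1) * (\<Sum>x\<in>X. c x * q x))"
proof -
  define M where "M = Pi_pmf X False (\<lambda>x. bernoulli_pmf (q x))"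
  define S where "S = (\<lambda>A. \<Sum>x\<in>X. c x * (if A x then 1 else 0::real))"
  define F where "F = (\<lambda>A. exp (s * S A - s * \<tau>))"
  have bounded: "S A \<le> (\<Sum>x\<in>X. c x)" for A
    unfolding S_def by (rule sum_mono) (use c in auto)
  have "measure_pmf.prob M {A. \<tau> \<le> S A} = measure_pmf.expectation M (indicator {A. \<tau> \<le> S A})"
    by simp
  also have "\<dots> \<le> measure_pmf.expectation M F"
  proof (rule integral_mono)
    show "integrable M (indicator {A. \<tau> \<le> S A} :: _ \<Rightarrow> real)"
      by (rule measure_pmf.integrable_const_bound[where B = 1]) (auto simp: indicator_def)
    show "integrable M F"
      by (rule measure_pmf.integrable_const_bound[where B = "exp (s * (\<Sum>x\<in>X. c x) - s * \<tau>)"])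
         (use bounded s in \<open>auto simp: F_def intro!: mult_left_mono\<close>)
    show "indicator {A. \<tau> \<le> S A} A \<le> F A" for A
      using s by (auto simp: F_def indicator_def mult_left_mono)
  qed
  also have "F = (\<lambda>A. exp (- s * \<tau>) * (\<Prod>x\<in>X. exp (s * c x * (if A x then 1 else 0))))"
    by (auto simp: F_def S_def exp_sum[OF fin, symmetric] exp_add[symmetric] sum_distrib_left
             intro!: ext arg_cong[where f = exp] sum.cong)
  also have "measure_pmf.expectation M \<dots> = exp (- s * \<tau>) *
      (\<Prod>x\<in>X. measure_pmf.expectation (bernoulli_pmf (q x)) (\<lambda>v. exp (s * c x * (if v then 1 else 0))))"
    unfolding M_def
    by (subst integral_mult_right_zero,
        subst expectation_prod_Pi_pmf[OF fin]) (auto intro!: integrable_measure_pmf_finite)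
  also have "\<dots> \<le> exp (- s * \<tau>) * (\<Prod>x\<in>X. exp (q x * c x * (exp s - 1)))"
    using c q by (intro mult_left_mono prod_mono conjI bernoulli_mgf_le) auto
  also have "\<dots> = exp (- s * \<tau> + (exp s - 1) * (\<Sum>x\<in>X. c x * q x))"
    unfolding exp_sum[OF fin, symmetric] exp_add[symmetric] by (simp add: sum_distrib_left algebra_simps)
  finally show ?thesis by (simp add: M_def S_def)
qed

lemma pow_div_fact_le_exp:
  fixes x :: real
  assumes "0 \<le> x"
  shows "x ^ k / fact k \<le> exp x"
proof -
  have "(\<Sum>n\<in>{k}. x ^ n /\<^sub>R fact n) \<le> (\<Sum>n. x ^ n /\<^sub>R fact n)"
    by (rule sum_le_suminf[OF summable_exp_generic]) (use assms in auto)
  thus ?thesis by (simp add: exp_def divide_inverse mult.commute)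
qed

lemma binomial_le_exp:
  assumes "1 \<le> m" "m \<le> n"
  shows "real (n choose m) \<le> exp (real m * (1 + ln (real n / real m)))"
proof -
  have m: "real m > 0" and nm: "real n / real m > 0" using assms by auto
  have "real (n choose m) * fact m \<le> real n ^ m"
    using binomial_fact_pow[of n m] by (metis of_nat_fact of_nat_le_iff of_nat_mult of_nat_power)
  hence "real (n choose m) \<le> (real n / real m) ^ m * (real m ^ m / fact m)"
    using m by (simp add: power_divide field_simps)
  also have "\<dots> \<le> (real n / real m) ^ m * exp (real m)"
    using pow_div_fact_le_exp[of "real m" m] by (intro mult_left_mono) auto
  also have "\<dots> = exp (real m * (1 + ln (real n / real m)))"
    using nm by (simp add: exp_add algebra_simps exp_of_nat_mult)
  finally show ?thesis .
qed

definition heavy_block_tail :: "nat \<Rightarrow> nat \<Rightarrow> real \<Rightarrow> real" where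
  "heavy_block_tail n m r = exp (- (8 * r * real m * (1 + ln (real n / real m) / 2)))"

lemma binomial_count_times_tail_le:
  fixes r :: real
  assumes "1 \<le> m" "m \<le> n" "r \<ge> 1"
  shows "real (n choose m) * real (n choose m) * 2 ^ m * heavy_block_tail n m r
         \<le> real n powr (- r) / real n"
proof -
  define l where "l = ln (real n / real m)"
  have m: "real m \<ge> 1" and n: "real n > 0" using assms by auto
  have l0: "l \<ge> 0" unfolding l_def using assms by simp
  have lnn: "ln (real n) = l + ln (real m)" unfolding l_def using assms by (simp add: ln_div)
  have lnm: "ln (real m) \<le> real m" using ln_le_minus_one[of "real m"] m by simp
  have ln2: "ln (2::real) \<le> 1" using ln_le_minus_one[of 2] by simp
  have binom: "real (n choose m) \<le> exp (real m * (1 + l))"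
    using binomial_le_exp[OF assms(1,2)] by (simp add: l_def)
  have pow2: "(2::real) ^ m = exp (real m * ln 2)" by (simp add: exp_of_nat_mult)
  have "real (n choose m) * real (n choose m) * 2 ^ m * heavy_block_tail n m r
       \<le> exp (real m * (1 + l)) * exp (real m * (1 + l)) * exp (real m * ln 2)
           * exp (- (8 * r * real m * (1 + l / 2)))"
    unfolding heavy_block_tail_def l_def[symmetric] pow2 using binom
    by (intro mult_mono) auto
  also have "\<dots> = exp (2 * real m * (1 + l) + real m * ln 2 - 8 * r * real m * (1 + l / 2))"
    by (simp only: exp_add[symmetric]) (simp add: algebra_simps)
  also have "\<dots> \<le> exp (- (r + 1) * ln (real n))"
  proof (subst exp_le_cancel_iff)
    have rm: "1 \<le> r * real m" using mult_mono[of 1 r 1 "real m"] m assms(3) by simp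
    have "r * ln (real m) \<le> r * real m" "real m \<le> r * real m" "real m * ln 2 \<le> real m"
      "l \<le> l * (r * real m)" "l * r \<le> l * (r * real m)" "l * real m \<le> l * (r * real m)"
      using lnm ln2 m l0 assms(3) rm by (simp_all add: mult_left_mono mult_right_mono mult_le_cancel_left1)
    then show "2 * real m * (1 + l) + real m * ln 2 - 8 * r * real m * (1 + l / 2)
        \<le> - (r + 1) * ln (real n)"
      unfolding lnn using lnm by (simp add: algebra_simps)
  qed
  also have "\<dots> = real n powr (- r) / real n"
    using n by (simp add: powr_def exp_diff exp_minus algebra_simps divide_inverse exp_add)
  finally show ?thesis .
qed

lemma chernoff_exponent_le:
  fixes m n :: nat and \<alpha> r \<beta> \<mu> :: real
  defines "s \<equiv> 2 + ln (real n / real m) / 2"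
  assumes m: "1 \<le> m" "m \<le> n" and \<alpha>: "sqrt (real m / real n) \<le> \<alpha>"
    and r: "r \<ge> 1" and \<beta>: "real m < \<beta>"
    and \<mu>: "0 \<le> \<mu>" "\<mu> \<le> \<beta> * (real m / real n) / \<alpha>"
  shows "- s * (8 * r * \<beta>) + (exp s - 1) * \<mu> \<le> - (8 * r * real m * (1 + ln (real n / real m) / 2))"
proof -
  have mn: "real m > 0" "real n > 0" using m by auto
  have \<alpha>0: "\<alpha> > 0" using \<alpha> mn by (smt (verit) divide_pos_pos real_sqrt_gt_zero)
  have exp_s: "exp s = exp 2 * sqrt (real n / real m)"
    using mn by (simp add: s_def exp_add powr_half_sqrt[symmetric] powr_def)
  have sqrt_ratio: "sqrt (real n / real m) * (real m / real n) = sqrt (real m / real n)"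
  proof -
    have "real m = sqrt m * sqrt m" "real n = sqrt n * sqrt n" by simp_all
    then have "sqrt (real n / real m) * (real m / real n)
        = sqrt n / sqrt m * (sqrt m * sqrt m / (sqrt n * sqrt n))"
      by (metis real_sqrt_divide)
    also have "\<dots> = sqrt m / sqrt n" using mn by (simp add: field_simps)
    finally show ?thesis by (simp add: real_sqrt_divide)
  qed
  have e2: "exp (2::real) \<le> 8"
  proof -
    have "exp (2::real) = exp 1 * exp 1" by (simp add: exp_add[symmetric])
    also have "\<dots> \<le> (272/100) * (272/100)" using e_less_272 by (intro mult_mono) auto
    finally show ?thesis by simp
  qed
  \<comment> \<open>The sqrt (n/m) in exp s is exactly cancelled by the hypothesis on \<alpha>.\<close>
  have "(exp s - 1) * \<mu> \<le> exp s * (\<beta> * (real m / real n) / \<alpha>)"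
    using \<mu> by (intro mult_mono) auto
  also have "\<dots> = exp 2 * \<beta> * (sqrt (real m / real n) / \<alpha>)"
    unfolding exp_s sqrt_ratio[symmetric] by (simp add: field_simps)
  also have "\<dots> \<le> exp 2 * \<beta>"
    using \<alpha> \<alpha>0 \<beta> mn by (intro mult_right_le_one_le) auto
  also have "\<dots> \<le> 8 * r * \<beta>"
    using e2 r \<beta> mn by (intro mult_right_mono) auto
  finally have "- s * (8 * r * \<beta>) + (exp s - 1) * \<mu> \<le> - (8 * r) * (s - 1) * \<beta>"
    by (simp add: algebra_simps)
  also have "\<dots> \<le> - (8 * r) * (s - 1) * real m"
    using m r \<beta> by (intro mult_left_mono_neg) (auto simp: s_def)
  finally show ?thesis by (simp add: s_def algebra_simps)
qed

lemma sum_layers_restrict: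
  fixes w :: "nat \<Rightarrow> nat \<Rightarrow> nat \<Rightarrow> 'a::comm_monoid_add"
  assumes B: "B \<subseteq> {..<n}" and J: "J \<subseteq> {..<n}"
  shows "(\<Sum>(l, i, j)\<in>{..<L} \<times> {..<n} \<times> {..<n}. if i \<in> B \<and> j \<in> J then w l i j else 0)
         = (\<Sum>i\<in>B. \<Sum>j\<in>J. \<Sum>l<L. w l i j)"
proof -
  have "(\<Sum>(l, i, j)\<in>{..<L} \<times> {..<n} \<times> {..<n}. if i \<in> B \<and> j \<in> J then w l i j else 0)
      = (\<Sum>l<L. \<Sum>i<n. \<Sum>j<n. if i \<in> B \<and> j \<in> J then w l i j else 0)"
    by (simp add: sum.cartesian_product)
  also have "\<dots> = (\<Sum>l<L. \<Sum>i<n. if i \<in> B then (\<Sum>j<n. if j \<in> J then w l i j else 0) else 0)"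
    by (intro sum.cong) auto
  also have "\<dots> = (\<Sum>l<L. \<Sum>i\<in>B. \<Sum>j\<in>J. w l i j)"
    using B J by (simp add: sum.inter_restrict[symmetric] Int_absorb1)
  also have "\<dots> = (\<Sum>i\<in>B. \<Sum>j\<in>J. \<Sum>l<L. w l i j)"
    by (simp add: sum.swap[of _ "{..<L}"])
  finally show ?thesis .
qed

lemma prob_heavy_block_le_tail:
  fixes n L m :: nat and \<omega> dl :: "nat \<Rightarrow> real" and p :: "nat \<Rightarrow> nat \<Rightarrow> nat \<Rightarrow> real"
    and W \<alpha> r :: real and B J :: "nat set"
  defines "D \<equiv> \<Sum>l<L. \<omega> l * dl l"
  assumes \<omega>: "\<And>l. l < L \<Longrightarrow> 0 < \<omega> l \<and> \<omega> l \<le> W"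
    and p: "\<And>l i j. l < L \<Longrightarrow> i < n \<Longrightarrow> j < n \<Longrightarrow>
              0 \<le> p l i j \<and> p l i j \<le> 1 \<and> real n * p l i j \<le> dl l"
    and D: "D > 0"
    and m: "1 \<le> m" "m \<le> n" "sqrt (real m / real n) \<le> \<alpha>" and r: "r \<ge> 1"
    and B: "B \<subseteq> {..<n}" "real m * W / (\<alpha> * D) < real (card B)"
    and J: "J \<subseteq> {..<n}" "card J = m"
  shows "measure_pmf.prob (multilayer_pmf L n p)
           {A. real (card B) * (8 * r * \<alpha> * D) \<le> (\<Sum>i\<in>B. \<Sum>j\<in>J. Abar L \<omega> A i j)}
         \<le> heavy_block_tail n m r"
proof -
  have mn: "real m > 0" "real n > 0" using m by auto
  have \<alpha>0: "\<alpha> > 0" using m(3) mn by (smt (verit) divide_pos_pos real_sqrt_gt_zero)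
  have "L > 0" using D by (cases L) (auto simp: D_def)
  then have W: "W > 0" using \<omega>[of 0] by auto
  define X where "X = {..<L} \<times> {..<n} \<times> {..<n}"
  define c where "c = (\<lambda>(l, i, j). if i \<in> B \<and> j \<in> J then \<omega> l / W else (0::real))"
  define q where "q = (\<lambda>(l::nat, i::nat, j::nat). p l i j)"
  define \<beta> where "\<beta> = real (card B) * \<alpha> * D / W"
  have c_bounds: "0 \<le> c x \<and> c x \<le> 1" if "x \<in> X" for x
    using that W by (auto simp: X_def c_def dest!: \<omega>)
  have q_bounds: "0 \<le> q x \<and> q x \<le> 1" if "x \<in> X" for x
    using that p by (auto simp: X_def q_def)
  have restrict: "(\<Sum>x\<in>X. c x * f x) = (\<Sum>i\<in>B. \<Sum>j\<in>J. \<Sum>l<L. \<omega> l / W * f (l, i, j))" for f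
  proof -
    have "(\<Sum>x\<in>X. c x * f x)
        = (\<Sum>(l, i, j)\<in>X. if i \<in> B \<and> j \<in> J then \<omega> l / W * f (l, i, j) else 0)"
      by (intro sum.cong) (auto simp: c_def)
    also have "\<dots> = (\<Sum>i\<in>B. \<Sum>j\<in>J. \<Sum>l<L. \<omega> l / W * f (l, i, j))"
      unfolding X_def by (rule sum_layers_restrict[OF B(1) J(1)])
    finally show ?thesis .
  qed
  have law: "multilayer_pmf L n p = Pi_pmf X False (\<lambda>x. bernoulli_pmf (q x))"
    unfolding multilayer_pmf_def X_def q_def
    by (intro arg_cong[where f = "Pi_pmf _ _"] ext) (auto split: prod.splits)
  have event: "{A. real (card B) * (8 * r * \<alpha> * D) \<le> (\<Sum>i\<in>B. \<Sum>j\<in>J. Abar L \<omega> A i j)}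
      = {A. 8 * r * \<beta> \<le> (\<Sum>x\<in>X. c x * (if A x then 1 else 0))}"
  proof -
    have "(\<Sum>x\<in>X. c x * (if A x then 1 else 0)) = (\<Sum>i\<in>B. \<Sum>j\<in>J. Abar L \<omega> A i j) / W" for A
      unfolding restrict by (simp add: Abar_def sum_divide_distrib)
    then show ?thesis using W by (auto simp: \<beta>_def field_simps)
  qed
  have mean: "(\<Sum>x\<in>X. c x * q x) \<le> \<beta> * (real m / real n) / \<alpha>"
  proof -
    have "(\<Sum>x\<in>X. c x * q x) = (\<Sum>i\<in>B. \<Sum>j\<in>J. \<Sum>l<L. \<omega> l / W * p l i j)"
      unfolding restrict by (simp add: q_def)
    also have "\<dots> \<le> (\<Sum>i\<in>B. \<Sum>j\<in>J. \<Sum>l<L. \<omega> l * dl l / (real n * W))"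
    proof (intro sum_mono)
      fix i j l assume "i \<in> B" "j \<in> J" "l \<in> {..<L}"
      then have "p l i j \<le> dl l / real n" and "0 < \<omega> l"
        using p[of l i j] \<omega>[of l] B J mn by (auto simp: field_simps)
      then have "\<omega> l / W * p l i j \<le> \<omega> l / W * (dl l / real n)"
        using W by (intro mult_left_mono) auto
      then show "\<omega> l / W * p l i j \<le> \<omega> l * dl l / (real n * W)" by (simp add: mult.commute)
    qed
    also have "\<dots> = real (card B) * real m * (D / (real n * W))"
      by (simp add: J D_def sum_divide_distrib)
    also have "\<dots> = \<beta> * (real m / real n) / \<alpha>"
      using \<alpha>0 by (simp add: \<beta>_def ac_simps)
    finally show ?thesis .
  qed
  have mean_nonneg: "0 \<le> (\<Sum>x\<in>X. c x * q x)"
    using c_bounds q_bounds by (intro sum_nonneg) auto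
  have \<beta>: "real m < \<beta>"
    using B(2) W D \<alpha>0 by (simp add: \<beta>_def field_simps)
  define s where "s = 2 + ln (real n / real m) / 2"
  have "measure_pmf.prob (Pi_pmf X False (\<lambda>x. bernoulli_pmf (q x)))
          {A. 8 * r * \<beta> \<le> (\<Sum>x\<in>X. c x * (if A x then 1 else 0))}
        \<le> exp (- s * (8 * r * \<beta>) + (exp s - 1) * (\<Sum>x\<in>X. c x * q x))"
    using c_bounds q_bounds m by (intro prob_weighted_bernoulli_sum_ge) (auto simp: X_def s_def)
  also have "\<dots> \<le> heavy_block_tail n m r"
    unfolding heavy_block_tail_def exp_le_cancel_iff s_def
    using m r \<beta> mean_nonneg mean by (rule chernoff_exponent_le)
  finally show ?thesis unfolding law event .
qed

lemma prob_UN_le_card: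
  assumes "finite K" "\<And>k. k \<in> K \<Longrightarrow> measure_pmf.prob M (F k) \<le> \<rho>"
  shows "measure_pmf.prob M (\<Union>k\<in>K. F k) \<le> real (card K) * \<rho>"
proof -
  have "measure_pmf.prob M (\<Union>k\<in>K. F k) \<le> (\<Sum>k\<in>K. measure_pmf.prob M (F k))"
    by (rule measure_pmf.finite_measure_subadditive_finite) (use assms(1) in auto)
  also have "\<dots> \<le> real (card K) * \<rho>"
    using sum_bounded_above[of K "\<lambda>k. measure_pmf.prob M (F k)" \<rho>] assms(2) by simp
  finally show ?thesis .
qed

lemma prob_many_heavy_rows_le:
  fixes n L m :: nat and \<omega> dl :: "nat \<Rightarrow> real" and p :: "nat \<Rightarrow> nat \<Rightarrow> nat \<Rightarrow> real"
    and W \<alpha> r :: real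
  defines "D \<equiv> \<Sum>l<L. \<omega> l * dl l"
  assumes \<omega>: "\<And>l. l < L \<Longrightarrow> 0 < \<omega> l \<and> \<omega> l \<le> W"
    and p: "\<And>l i j. l < L \<Longrightarrow> i < n \<Longrightarrow> j < n \<Longrightarrow>
              0 \<le> p l i j \<and> p l i j \<le> 1 \<and> real n * p l i j \<le> dl l"
    and D: "D > 0"
    and m: "1 \<le> m" "m \<le> n" "sqrt (real m / real n) \<le> \<alpha>" and r: "r \<ge> 1"
  shows "measure_pmf.prob (multilayer_pmf L n p)
           {A. \<exists>I J. I \<subseteq> {..<n} \<and> J \<subseteq> {..<n} \<and> card I = m \<and> card J = m \<and>
              real m * W / (\<alpha> * D) < real (card {i\<in>I. 8 * r * \<alpha> * D < (\<Sum>j\<in>J. Abar L \<omega> A i j)})}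
         \<le> real n powr (- r) / real n"
    (is "measure_pmf.prob ?M ?Many \<le> _")
proof -
  define S where "S = {I. I \<subseteq> {..<n} \<and> card I = m}"
  define Bs where "Bs I = {B. B \<subseteq> I \<and> real m * W / (\<alpha> * D) < real (card B)}" for I :: "nat set"
  define Heavy where "Heavy B J =
    {A. real (card B) * (8 * r * \<alpha> * D) \<le> (\<Sum>i\<in>B. \<Sum>j\<in>J. Abar L \<omega> A i j)}" for B J
  have cover: "?Many \<subseteq> (\<Union>I\<in>S. \<Union>J\<in>S. \<Union>B\<in>Bs I. Heavy B J)"
  proof safe
    fix A I J
    assume IJ: "I \<subseteq> {..<n}" "J \<subseteq> {..<n}" "m = card I" "card J = card I"
      and many: "real (card I) * W / (\<alpha> * D)
                   < real (card {i\<in>I. 8 * r * \<alpha> * D < (\<Sum>j\<in>J. Abar L \<omega> A i j)})"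
    define B where "B = {i\<in>I. 8 * r * \<alpha> * D < (\<Sum>j\<in>J. Abar L \<omega> A i j)}"
    have "B \<in> Bs I" using many IJ by (auto simp: Bs_def B_def)
    moreover have "A \<in> Heavy B J"
      unfolding Heavy_def mem_Collect_eq by (rule sum_bounded_below) (auto simp: B_def)
    ultimately show "A \<in> (\<Union>I\<in>S. \<Union>J\<in>S. \<Union>B\<in>Bs I. Heavy B J)"
      using IJ by (auto simp: S_def)
  qed
  have finite_S: "finite S"
    by (rule finite_subset[of _ "Pow {..<n}"]) (auto simp: S_def)
  have card_S: "card S = n choose m"
    using n_subsets[of "{..<n}" m] by (simp add: S_def)
  have block: "measure_pmf.prob ?M (\<Union>B\<in>Bs I. Heavy B J) \<le> 2 ^ m * heavy_block_tail n m r"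
    if "I \<in> S" "J \<in> S" for I J
  proof -
    have I: "finite I" "card I = m" using that(1) by (auto simp: S_def intro: finite_subset)
    have "Bs I \<subseteq> Pow I" by (auto simp: Bs_def)
    then have fin: "finite (Bs I)" and card: "card (Bs I) \<le> 2 ^ m"
      using I card_mono[of "Pow I" "Bs I"] by (auto simp: card_Pow intro: finite_subset)
    have "measure_pmf.prob ?M (\<Union>B\<in>Bs I. Heavy B J) \<le> real (card (Bs I)) * heavy_block_tail n m r"
      unfolding Heavy_def D_def
    proof (rule prob_UN_le_card[OF fin], rule prob_heavy_block_le_tail)
      fix B assume "B \<in> Bs I"
      then show "B \<subseteq> {..<n}" "real m * W / (\<alpha> * (\<Sum>l<L. \<omega> l * dl l)) < real (card B)"
        using that(1) by (auto simp: Bs_def S_def D_def)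
    qed (use \<omega> p D m r that(2) in \<open>auto simp: D_def S_def\<close>)
    also have "\<dots> \<le> 2 ^ m * heavy_block_tail n m r"
      using card by (intro mult_right_mono) (auto simp: heavy_block_tail_def)
    finally show ?thesis .
  qed
  have "measure_pmf.prob ?M ?Many \<le> measure_pmf.prob ?M (\<Union>I\<in>S. \<Union>J\<in>S. \<Union>B\<in>Bs I. Heavy B J)"
    by (rule measure_pmf.finite_measure_mono[OF cover]) simp
  also have "\<dots> \<le> real (card S) * (real (card S) * (2 ^ m * heavy_block_tail n m r))"
    using block by (intro prob_UN_le_card finite_S) auto
  also have "\<dots> \<le> real n powr (- r) / real n"
    using binomial_count_times_tail_le[OF m(1,2) r] by (simp add: card_S ac_simps)
  finally show ?thesis .
qed

lemma prob_few_heavy_rows: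
  fixes n L :: nat and \<omega> dl :: "nat \<Rightarrow> real" and p :: "nat \<Rightarrow> nat \<Rightarrow> nat \<Rightarrow> real"
    and W \<alpha> r :: real
  defines "D \<equiv> \<Sum>l<L. \<omega> l * dl l"
  assumes \<omega>: "\<And>l. l < L \<Longrightarrow> 0 < \<omega> l \<and> \<omega> l \<le> W"
    and p: "\<And>l i j. l < L \<Longrightarrow> i < n \<Longrightarrow> j < n \<Longrightarrow>
              0 \<le> p l i j \<and> p l i j \<le> 1 \<and> real n * p l i j \<le> dl l"
    and D: "D > 0" and r: "r \<ge> 1"
  shows "1 - real n powr (- r) \<le> measure_pmf.prob (multilayer_pmf L n p)
           {A. \<forall>m. 1 \<le> m \<and> m \<le> n \<and> sqrt (real m / real n) \<le> \<alpha> \<longrightarrow>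
              (\<forall>I J. I \<subseteq> {..<n} \<and> J \<subseteq> {..<n} \<and> card I = m \<and> card J = m \<longrightarrow>
                 real (card {i\<in>I. \<not> ((\<Sum>j\<in>J. Abar L \<omega> A i j) \<le> 8 * r * \<alpha> * D)})
                 \<le> real m * W / (\<alpha> * D))}"
    (is "_ \<le> measure_pmf.prob ?M ?Good")
proof -
  define Ms where "Ms = {m \<in> {1..n}. sqrt (real m / real n) \<le> \<alpha>}"
  define Many where "Many m = {A. \<exists>I J. I \<subseteq> {..<n} \<and> J \<subseteq> {..<n} \<and> card I = m \<and> card J = m \<and>
      real m * W / (\<alpha> * D) < real (card {i\<in>I. 8 * r * \<alpha> * D < (\<Sum>j\<in>J. Abar L \<omega> A i j)})}"
    for m
  have "UNIV - ?Good \<subseteq> (\<Union>m\<in>Ms. Many m)"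
  proof
    fix A assume "A \<in> UNIV - ?Good"
    then obtain m I J where "m \<in> Ms" "I \<subseteq> {..<n} \<and> J \<subseteq> {..<n} \<and> card I = m \<and> card J = m"
      "real m * W / (\<alpha> * D) < real (card {i\<in>I. 8 * r * \<alpha> * D < (\<Sum>j\<in>J. Abar L \<omega> A i j)})"
      by (auto simp: Ms_def not_le)
    then show "A \<in> (\<Union>m\<in>Ms. Many m)" unfolding Many_def by blast
  qed
  then have "measure_pmf.prob ?M (UNIV - ?Good) \<le> measure_pmf.prob ?M (\<Union>m\<in>Ms. Many m)"
    by (rule measure_pmf.finite_measure_mono) simp
  also have "\<dots> \<le> real (card Ms) * (real n powr (- r) / real n)"
  proof (rule prob_UN_le_card)
    fix m assume "m \<in> Ms"
    then show "measure_pmf.prob ?M (Many m) \<le> real n powr (- r) / real n"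
      unfolding Many_def D_def using \<omega> p D r
      by (intro prob_many_heavy_rows_le) (auto simp: Ms_def D_def)
  qed (simp add: Ms_def)
  also have "\<dots> \<le> real n powr (- r)"
  proof -
    have "card Ms \<le> card {1..n}" by (rule card_mono) (auto simp: Ms_def)
    then have "card Ms \<le> n" by simp
    then have "real (card Ms) * (real n powr (- r) / real n) \<le> real n * (real n powr (- r) / real n)"
      by (intro mult_right_mono) auto
    also have "\<dots> \<le> real n powr (- r)" by (cases "n = 0") auto
    finally show ?thesis .
  qed
  finally show ?thesis
    using measure_pmf.prob_compl[of ?Good ?M] by simp
qed

lemma winf_ge: "l < L \<Longrightarrow> \<omega> l \<le> winf L \<omega>"
  unfolding winf_def by (rule Max_ge) auto

lemma dmax_ge:
  assumes "i < n" "j < n"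
  shows "real n * p l i j \<le> dmax n p l"
proof -
  have "finite {real n * p l i j |i j. i < n \<and> j < n}"
    by (rule finite_subset[of _ "(\<lambda>(i, j). real n * p l i j) ` ({..<n} \<times> {..<n})"]) auto
  then show ?thesis using assms unfolding dmax_def by (intro Max_ge) auto
qed

theorem mainTheorem13:
  fixes c1 :: real
  assumes "c1 \<ge> 1"
  shows "\<exists>C>0. \<forall>(n::nat) (L::nat) (\<omega>::nat \<Rightarrow> real) (p::nat \<Rightarrow> nat \<Rightarrow> nat \<Rightarrow> real) (\<alpha>::real) (r::real).
     n \<ge> 1 \<longrightarrow>
     (\<forall>l<L. \<forall>i<n. \<forall>j<n. 0 \<le> p l i j \<and> p l i j \<le> 1) \<longrightarrow>
     (\<forall>l<L. \<omega> l > 0) \<longrightarrow>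
     (\<Sum>l<L. \<omega> l) = 1 \<longrightarrow>
     (\<Sum>l<L. \<omega> l * dmax n p l) > 0 \<longrightarrow>
     (\<forall>i<n. \<forall>J. J \<subseteq> {..<n} \<longrightarrow>
        winf L \<omega> * (\<Sum>l<L. \<Sum>j\<in>J. p l i j) \<le> c1 * (\<Sum>l<L. \<Sum>j\<in>J. \<omega> l * p l i j)) \<longrightarrow>
     \<alpha> > 0 \<longrightarrow> r \<ge> 1 \<longrightarrow>
     measure_pmf.prob (multilayer_pmf L n p)
       {A. \<forall>m. 1 \<le> m \<and> m \<le> n \<and> sqrt (real m / real n) \<le> \<alpha> \<longrightarrow>
             (\<forall>I J. I \<subseteq> {..<n} \<and> J \<subseteq> {..<n} \<and> card I = m \<and> card J = m \<longrightarrow>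
                real (card {i\<in>I. \<not> ((\<Sum>j\<in>J. Abar L \<omega> A i j)
                                      \<le> C * r * \<alpha> * (\<Sum>l<L. \<omega> l * dmax n p l))})
                \<le> real m * winf L \<omega> / (\<alpha> * (\<Sum>l<L. \<omega> l * dmax n p l)))}
       \<ge> 1 - real n powr (- r)"
  by (intro exI[of _ 8] conjI allI impI zero_less_numeral prob_few_heavy_rows)
     (auto intro: winf_ge dmax_ge)

end
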